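(* Let $D:\mathbf{Sets}\to\mathbf{cMet}_1$ send a set $X$ to $X$ with the discrete metric ($d(x,y)=1$ for $x\ne y$, $d(x,x)=0$) and a function to itself. Then $\mathbf{CMT}(D X)=\mathbf{U}(X)$ as preorders for every set $X$, and $(D,\mathrm{id})$ is an embedding of universally coherent hyperdoctrines $\mathbf{U}\to\mathbf{CMT}$ which is bijective on predicates. Consequently, for every infinite set $X$ the preorder $\mathbf{CMT}(DX)$ has neither a Heyting negation nor a Heyting implication.
   Context: $\mathbf{cMet}_1$ is the category of complete metric spaces of diameter at most 1 with uniformly continuous maps. For functions $\alpha,\beta:X\to[0,1]$ write $\alpha\sqsubseteq\beta$ if for every $\varepsilon>0$ there exists $\delta>0$ such that for all $x$, $\alpha(x)\le\delta$ implies $\beta(x)\le\varepsilon$. $\mathbf{U}$ is the indexed preorder on $\mathbf{Sets}$ with $\mathbf{U}(X)$ all functions $X\to[0,1]$ under $\sqsubseteq$ and reindexing by precomposition; $\mathbf{CMT}$ is the indexed preorder on $\mathbf{cMet}_1$ with $\mathbf{CMT}(X,d)$ the uniformly continuous functions $(X,d)\to[0,1]$ under $\sqsubseteq$ and reindexing by precomposition. Both are universally coherent hyperdoctrines (meet $=\max$, join $=\min$, $\exists=\inf$ and $\forall=\sup$ over fibres of projections). A morphism of universally coherent hyperdoctrines $(F,\eta):\mathbf P\to\mathbf P'$ (bases $\mathcal C,\mathcal D$) consists of a finite-product-preserving functor $F:\mathcal C\to\mathcal D$ and a pseudonatural transformation $\eta:\mathbf P\to\mathbf P'\circ F^{op}$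 whose components preserve finite meets and joins up to isomorphism, commuting up to isomorphism with $\exists_\pi$ and $\forall_\pi$ along projections and preserving equality predicates. It is an embedding if $F$ is full and faithful and each $\eta_X$ reflects the order. A Heyting negation on a preorder with meets and bottom $\bot$ is an operation $\neg$ with $\gamma\wedge\beta\le\bot\iff\gamma\le\neg\beta$ for all $\gamma$. *)

theory Defs
  imports "HOL-Analysis.Analysis"
begin

section \<open>The base category cMet_1 (objects only; morphisms are uniformly continuous maps)\<close>

definition cMet1_obj :: "'a metric \<Rightarrow> bool" where
  "cMet1_obj m \<longleftrightarrow> mcomplete_of m \<and> (\<forall>x\<in>mspace m. \<forall>y\<in>mspace m. mdist m x y \<le> 1)"

definition unit_interval_metric :: "real metric" where
  "unit_interval_metric = submetric euclidean_metric {0..1}"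

text \<open>Binary product in cMet_1: the cartesian product with the max metric.\<close>
definition max_prod_metric :: "'a metric \<Rightarrow> 'b metric \<Rightarrow> ('a \<times> 'b) metric" where
  "max_prod_metric m1 m2 =
     metric (mspace m1 \<times> mspace m2,
             \<lambda>(x1,x2) (y1,y2). max (mdist m1 x1 y1) (mdist m2 x2 y2))"

definition disc :: "'a set \<Rightarrow> 'a metric" where
  "disc X = metric (X, \<lambda>x y. if x = y then 0 else 1)"

definition sqle :: "'a set \<Rightarrow> ('a \<Rightarrow> real) \<Rightarrow> ('a \<Rightarrow> real) \<Rightarrow> bool" where
  "sqle X \<alpha> \<beta> \<longleftrightarrow>
     (\<forall>\<epsilon>>0. \<exists>\<delta>>0. \<forall>x\<in>X. \<alpha> x \<le> \<delta> \<longrightarrow> \<beta> x \<le> \<epsilon>)"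

text \<open>U(X): all functions X -> [0,1] (values off X are irrelevant).\<close>
definition U_pred :: "'a set \<Rightarrow> ('a \<Rightarrow> real) set" where
  "U_pred X = {\<alpha>. \<forall>x\<in>X. \<alpha> x \<in> {0..1}}"

definition CMT_pred :: "'a metric \<Rightarrow> ('a \<Rightarrow> real) set" where
  "CMT_pred m = {\<alpha>. uniformly_continuous_map m unit_interval_metric \<alpha>}"

text \<open>Equality predicates: in U on X the characteristic (0 = true) predicate of the
  diagonal; in CMT on (X,d) the metric d itself.\<close>
definition eq_U :: "('a \<times> 'a) \<Rightarrow> real" where
  "eq_U = (\<lambda>(x,y). if x = y then 0 else 1)"

definition eq_CMT :: "'a metric \<Rightarrow> ('a \<times> 'a) \<Rightarrow> real" where
  "eq_CMT m = (\<lambda>(x,y). mdist m x y)"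

definition meetP :: "('a \<Rightarrow> real) \<Rightarrow> ('a \<Rightarrow> real) \<Rightarrow> ('a \<Rightarrow> real)" where
  "meetP \<alpha> \<beta> = (\<lambda>x. max (\<alpha> x) (\<beta> x))"

definition botP :: "'a \<Rightarrow> real" where
  "botP = (\<lambda>x. 1)"

definition joinP :: "('a \<Rightarrow> real) \<Rightarrow> ('a \<Rightarrow> real) \<Rightarrow> ('a \<Rightarrow> real)" where
  "joinP \<alpha> \<beta> = (\<lambda>x. min (\<alpha> x) (\<beta> x))"

definition topP :: "'a \<Rightarrow> real" where
  "topP = (\<lambda>x. 0)"

text \<open>Quantifiers along the projection X x Y -> X: inf / sup over the fibre
  (with the [0,1]-valued conventions inf of empty = 1, sup of empty = 0).\<close>
definition exP :: "'b set \<Rightarrow> ('a \<times> 'b \<Rightarrow> real) \<Rightarrow> ('a \<Rightarrow> real)" where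
  "exP Y \<alpha> = (\<lambda>x. if Y = {} then 1 else (INF y\<in>Y. \<alpha> (x,y)))"

definition allP :: "'b set \<Rightarrow> ('a \<times> 'b \<Rightarrow> real) \<Rightarrow> ('a \<Rightarrow> real)" where
  "allP Y \<alpha> = (\<lambda>x. if Y = {} then 0 else (SUP y\<in>Y. \<alpha> (x,y)))"

definition has_heyting_negation ::
  "('a \<Rightarrow> real) set \<Rightarrow> (('a \<Rightarrow> real) \<Rightarrow> ('a \<Rightarrow> real) \<Rightarrow> bool) \<Rightarrow> bool" where
  "has_heyting_negation P le \<longleftrightarrow>
     (\<exists>neg. \<forall>\<beta>\<in>P. neg \<beta> \<in> P \<and>
        (\<forall>\<gamma>\<in>P. le (meetP \<gamma> \<beta>) botP \<longleftrightarrow> le \<gamma> (neg \<beta>)))"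

definition has_heyting_implication ::
  "('a \<Rightarrow> real) set \<Rightarrow> (('a \<Rightarrow> real) \<Rightarrow> ('a \<Rightarrow> real) \<Rightarrow> bool) \<Rightarrow> bool" where
  "has_heyting_implication P le \<longleftrightarrow>
     (\<exists>imp. \<forall>\<beta>\<in>P. \<forall>\<gamma>\<in>P. imp \<beta> \<gamma> \<in> P \<and>
        (\<forall>\<delta>\<in>P. le (meetP \<delta> \<beta>) \<gamma> \<longleftrightarrow> le \<delta> (imp \<beta> \<gamma>)))"

end

theory Submission
  imports Defs
begin

text \<open>On a discrete space every map is uniformly continuous (take \<open>\<delta> = 1/2\<close>), so
  \<open>CMT(D X)\<close> and \<open>U(X)\<close> consist of the same functions, compared by the same relation;
  the connectives and quantifiers are given by the same formulas on both sides.
  For infinite \<open>X\<close> pick \<open>\<beta> > 0\<close> taking arbitrarily small values along an injective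
  sequence. A negation \<open>\<not>\<beta>\<close> must lie above every point predicate \<open>{x}\<close> (since
  \<open>{x} \<and> \<beta>\<close> is bounded away from \<open>0\<close>), hence vanishes; but then \<open>\<not>\<beta> \<and> \<beta> = \<beta>\<close> is not
  below \<open>\<bottom>\<close>. An implication would yield the negation \<open>\<beta> \<Rightarrow> \<bottom>\<close>.\<close>

lemma discrete_metric_dd_eq: "discrete_metric.dd = (\<lambda>x y::'a. if x = y then 0 else (1::real))"
  by (simp add: discrete_metric.dd_def)

lemma Metric_space_discrete: "Metric_space X (\<lambda>x y::'a. if x = y then 0 else (1::real))"
  using metric_M_dd[of X] by (simp add: discrete_metric_dd_eq)

lemma mspace_disc [simp]: "mspace (disc X) = X"
  by (simp add: disc_def Metric_space.mspace_metric[OF Metric_space_discrete])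

lemma mdist_disc [simp]: "mdist (disc X) = (\<lambda>x y. if x = y then 0 else 1)"
  by (simp add: disc_def Metric_space.mdist_metric[OF Metric_space_discrete])

lemma cMet1_obj_disc: "cMet1_obj (disc X)"
  unfolding cMet1_obj_def mcomplete_of_def
  using discrete_metric.mcomplete_discrete_metric[of X] by (simp add: discrete_metric_dd_eq)

lemma uniformly_continuous_map_disc:
  "uniformly_continuous_map (disc X) m f \<longleftrightarrow> f \<in> X \<rightarrow> mspace m"
proof
  assume "uniformly_continuous_map (disc X) m f"
  then show "f \<in> X \<rightarrow> mspace m"
    using uniformly_continuous_map_funspace by fastforce
next
  assume f: "f \<in> X \<rightarrow> mspace m"
  have "mdist m (f y) (f x) < \<epsilon>"
    if "\<epsilon> > 0" "x \<in> X" "(if y = x then 0 else 1) < (1/2::real)" for \<epsilon> x y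
  proof -
    have "y = x" using that(3) by (simp split: if_splits)
    moreover have "f x \<in> mspace m" using Pi_mem[OF f that(2)] .
    ultimately show ?thesis using that(1) by (metis mdist_zero)
  qed
  then show "uniformly_continuous_map (disc X) m f"
    unfolding uniformly_continuous_map_def using f
    by (auto intro!: exI[of _ "1/2::real"])
qed

lemma CMT_pred_disc: "CMT_pred (disc X) = U_pred X"
  unfolding CMT_pred_def U_pred_def uniformly_continuous_map_disc unit_interval_metric_def
  by (simp add: Pi_iff)

lemma disc_Times: "disc (X \<times> Y) = max_prod_metric (disc X) (disc Y)"
  unfolding max_prod_metric_def mspace_disc mdist_disc
  unfolding disc_def
  by (rule arg_cong[where f = metric]) (auto simp: fun_eq_iff)

lemma disc_unit_terminal:
  "\<exists>!g. g \<in> mspace m \<rightarrow>\<^sub>E mspace (disc {()}) \<and> uniformly_continuous_map m (disc {()}) g"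
proof (rule ex1I[of _ "\<lambda>_. ()"])
  show "(\<lambda>_. ()) \<in> mspace m \<rightarrow>\<^sub>E mspace (disc {()}) \<and>
        uniformly_continuous_map m (disc {()}) (\<lambda>_. ())"
    unfolding uniformly_continuous_map_def by (auto simp: PiE_def extensional_def)
qed (auto simp: fun_eq_iff)

lemma eq_CMT_disc: "p \<in> X \<times> X \<Longrightarrow> eq_CMT (disc X) p = eq_U p"
  by (auto simp: eq_CMT_def eq_U_def)

lemma meetP_in_U_pred: "\<alpha> \<in> U_pred X \<Longrightarrow> \<beta> \<in> U_pred X \<Longrightarrow> meetP \<alpha> \<beta> \<in> U_pred X"
  and joinP_in_U_pred: "\<alpha> \<in> U_pred X \<Longrightarrow> \<beta> \<in> U_pred X \<Longrightarrow> joinP \<alpha> \<beta> \<in> U_pred X"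
  and topP_in_U_pred: "topP \<in> U_pred X"
  and botP_in_U_pred: "botP \<in> U_pred X"
  unfolding U_pred_def meetP_def joinP_def topP_def botP_def by auto

lemma INF_SUP_in_unit_interval:
  fixes f :: "'b \<Rightarrow> real"
  assumes "Y \<noteq> {}" and "\<And>y. y \<in> Y \<Longrightarrow> f y \<in> {0..1}"
  shows "(INF y\<in>Y. f y) \<in> {0..1}" and "(SUP y\<in>Y. f y) \<in> {0..1}"
proof -
  obtain y0 where y0: "y0 \<in> Y" using assms(1) by blast
  have bdd: "bdd_below (f ` Y)" "bdd_above (f ` Y)"
    using assms(2) by (auto intro!: bdd_belowI[of _ 0] bdd_aboveI[of _ 1])
  have "0 \<le> (INF y\<in>Y. f y)" "(SUP y\<in>Y. f y) \<le> 1"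
    using assms by (auto intro!: cINF_greatest cSUP_least)
  moreover have "(INF y\<in>Y. f y) \<le> 1" "0 \<le> (SUP y\<in>Y. f y)"
    using cINF_lower[OF bdd(1) y0] cSUP_upper[OF y0 bdd(2)] assms(2)[OF y0] by auto
  ultimately show "(INF y\<in>Y. f y) \<in> {0..1}" "(SUP y\<in>Y. f y) \<in> {0..1}"
    by auto
qed

lemma exP_in_U_pred: "\<alpha> \<in> U_pred (X \<times> Y) \<Longrightarrow> exP Y \<alpha> \<in> U_pred X"
  and allP_in_U_pred: "\<alpha> \<in> U_pred (X \<times> Y) \<Longrightarrow> allP Y \<alpha> \<in> U_pred X"
  using INF_SUP_in_unit_interval[of Y "\<lambda>y. \<alpha> (_, y)"]
  unfolding U_pred_def exP_def allP_def by auto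

lemma sqle_refl: "sqle X \<alpha> \<alpha>"
  unfolding sqle_def by auto

lemma sqle_le_zero:
  assumes "sqle X \<gamma> \<nu>" and "x \<in> X" and "\<gamma> x \<le> 0"
  shows "\<nu> x \<le> 0"
proof (rule field_le_epsilon)
  fix \<epsilon> :: real assume "\<epsilon> > 0"
  then obtain \<delta> where "\<delta> > 0" "\<forall>y\<in>X. \<gamma> y \<le> \<delta> \<longrightarrow> \<nu> y \<le> \<epsilon>"
    using assms(1) unfolding sqle_def by blast
  then show "\<nu> x \<le> 0 + \<epsilon>" using assms(2,3) by force
qed

lemma sqle_botP_iff: "sqle X \<alpha> botP \<longleftrightarrow> (\<exists>\<delta>>0. \<forall>x\<in>X. \<delta> < \<alpha> x)"
proof
  assume "sqle X \<alpha> botP"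
  then obtain \<delta> where "\<delta> > 0" "\<forall>x\<in>X. \<alpha> x \<le> \<delta> \<longrightarrow> botP x \<le> (1/2::real)"
    unfolding sqle_def by (meson half_gt_zero zero_less_one)
  then show "\<exists>\<delta>>0. \<forall>x\<in>X. \<delta> < \<alpha> x"
    by (intro exI[of _ \<delta>]) (auto simp: botP_def not_le)
next
  assume "\<exists>\<delta>>0. \<forall>x\<in>X. \<delta> < \<alpha> x"
  then obtain \<delta> where "\<delta> > 0" "\<forall>x\<in>X. \<delta> < \<alpha> x" by blast
  then have "\<forall>x\<in>X. \<alpha> x \<le> \<delta> \<longrightarrow> botP x \<le> \<epsilon>" for \<epsilon> :: real
    by (auto simp: not_le)
  with \<open>\<delta> > 0\<close> show "sqle X \<alpha> botP"
    unfolding sqle_def by blast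
qed

lemma exists_pos_pred_not_bounded_away:
  assumes "infinite X"
  obtains \<beta> where "\<beta> \<in> U_pred X" "\<And>x. \<beta> x > 0" "\<And>\<delta>. \<delta> > 0 \<Longrightarrow> \<exists>x\<in>X. \<beta> x \<le> \<delta>"
proof -
  obtain f :: "nat \<Rightarrow> 'a" where f: "inj f" "range f \<subseteq> X"
    using assms infinite_countable_subset by blast
  define \<beta> where "\<beta> = (\<lambda>x. 1 / (real (inv f x) + 1))"
  show thesis
  proof (rule that)
    show "\<beta> \<in> U_pred X" "\<And>x. \<beta> x > 0"
      unfolding U_pred_def \<beta>_def by auto
    fix \<delta> :: real assume "\<delta> > 0"
    then obtain n where "inverse (real (Suc n)) < \<delta>"
      using reals_Archimedean by blast
    then have "\<beta> (f n) \<le> \<delta>"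
      using f(1) by (simp add: \<beta>_def divide_inverse add.commute)
    then show "\<exists>x\<in>X. \<beta> x \<le> \<delta>" using f(2) by blast
  qed
qed

lemma not_has_heyting_negation_U_pred:
  assumes "infinite X"
  shows "\<not> has_heyting_negation (U_pred X) (sqle X)"
proof
  assume "has_heyting_negation (U_pred X) (sqle X)"
  then obtain neg where neg: "\<forall>\<beta>\<in>U_pred X. neg \<beta> \<in> U_pred X \<and>
      (\<forall>\<gamma>\<in>U_pred X. sqle X (meetP \<gamma> \<beta>) botP \<longleftrightarrow> sqle X \<gamma> (neg \<beta>))"
    unfolding has_heyting_negation_def by blast
  obtain \<beta> where \<beta>: "\<beta> \<in> U_pred X" "\<And>x. \<beta> x > 0" "\<And>\<delta>. \<delta> > 0 \<Longrightarrow> \<exists>x\<in>X. \<beta> x \<le> \<delta>"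
    using exists_pos_pred_not_bounded_away[OF assms] by metis
  have neg_\<beta>: "neg \<beta> \<in> U_pred X"
    and adj: "\<And>\<gamma>. \<gamma> \<in> U_pred X \<Longrightarrow> sqle X (meetP \<gamma> \<beta>) botP \<longleftrightarrow> sqle X \<gamma> (neg \<beta>)"
    using neg \<beta>(1) by blast+
  have "neg \<beta> x = 0" if x: "x \<in> X" for x
  proof -
    define point where "point = (\<lambda>y. if y = x then 0 else 1::real)"
    have "\<forall>y\<in>X. min (\<beta> x) 1 / 2 < meetP point \<beta> y"
      using \<beta>(2)[of x] by (auto simp: meetP_def point_def)
    moreover have "0 < min (\<beta> x) 1 / 2" using \<beta>(2)[of x] by simp
    ultimately have "sqle X (meetP point \<beta>) botP"
      unfolding sqle_botP_iff by blast
    moreover have "point \<in> U_pred X" by (simp add: U_pred_def point_def)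
    ultimately have "sqle X point (neg \<beta>)" using adj by blast
    then have "neg \<beta> x \<le> 0" using sqle_le_zero x by (force simp: point_def)
    then show ?thesis using neg_\<beta> x by (force simp: U_pred_def)
  qed
  then have "\<forall>x\<in>X. meetP (neg \<beta>) \<beta> x = \<beta> x"
    using \<beta>(2) by (simp add: meetP_def less_imp_le)
  moreover have "sqle X (meetP (neg \<beta>) \<beta>) botP"
    using adj[OF neg_\<beta>] sqle_refl by blast
  ultimately show False
    using \<beta>(3) by (force simp: sqle_botP_iff not_le)
qed

lemma has_heyting_negation_if_implication:
  assumes "has_heyting_implication P le" and "botP \<in> P"
  shows "has_heyting_negation P le"
proof -
  obtain imp where "\<forall>\<beta>\<in>P. \<forall>\<gamma>\<in>P. imp \<beta> \<gamma> \<in> P \<and>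
      (\<forall>\<delta>\<in>P. le (meetP \<delta> \<beta>) \<gamma> \<longleftrightarrow> le \<delta> (imp \<beta> \<gamma>))"
    using assms(1) unfolding has_heyting_implication_def by blast
  then show ?thesis
    unfolding has_heyting_negation_def using assms(2)
    by (intro exI[of _ "\<lambda>\<beta>. imp \<beta> botP"]) blast
qed

theorem mainTheorem6:
  fixes X :: "'a set" and Y :: "'b set"
  shows
    \<comment> \<open>D X is an object of cMet_1 with carrier X\<close>
    "cMet1_obj (disc X) \<and> mspace (disc X) = X
     \<comment> \<open>CMT(D X) = U(X) as preorders (same carrier, same order relation)\<close>
     \<and> CMT_pred (disc X) = U_pred X
     \<and> (\<forall>\<alpha>\<in>U_pred X. \<forall>\<beta>\<in>U_pred X. sqle (mspace (disc X)) \<alpha> \<beta> \<longleftrightarrow> sqle X \<alpha> \<beta>)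
     \<and> bij_betw id (U_pred X) (CMT_pred (disc X))
     \<comment> \<open>D is a functor which is full (and faithful, acting as identity on maps)\<close>
     \<and> (\<forall>f. uniformly_continuous_map (disc X) (disc Y) f \<longleftrightarrow> f \<in> X \<rightarrow> Y)
     \<comment> \<open>D preserves finite products\<close>
     \<and> disc (X \<times> Y) = max_prod_metric (disc X) (disc Y)
     \<and> (\<forall>m::'b metric. cMet1_obj m \<longrightarrow>
           (\<exists>!g. g \<in> mspace m \<rightarrow>\<^sub>E mspace (disc {()}) \<and>
                 uniformly_continuous_map m (disc {()}) g))
     \<comment> \<open>the (shared) connectives and quantifiers of U land in CMT(D -)\<close>
     \<and> (\<forall>\<alpha>\<in>CMT_pred (disc X). \<forall>\<beta>\<in>CMT_pred (disc X).
           meetP \<alpha> \<beta> \<in> CMT_pred (disc X) \<and> joinP \<alpha> \<beta> \<in> CMT_pred (disc X))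
     \<and> topP \<in> CMT_pred (disc X) \<and> botP \<in> CMT_pred (disc X)
     \<and> (\<forall>\<alpha>\<in>CMT_pred (disc (X \<times> Y)).
           exP Y \<alpha> \<in> CMT_pred (disc X) \<and> allP Y \<alpha> \<in> CMT_pred (disc X))
     \<comment> \<open>the identity preserves equality predicates\<close>
     \<and> (\<forall>p\<in>X \<times> X. eq_CMT (disc X) p = eq_U p)
     \<comment> \<open>no Heyting negation / implication when X is infinite\<close>
     \<and> (infinite X \<longrightarrow>
          \<not> has_heyting_negation (CMT_pred (disc X)) (sqle X)
        \<and> \<not> has_heyting_implication (CMT_pred (disc X)) (sqle X))"
proof -
  have "\<not> has_heyting_implication (U_pred X) (sqle X)" if "infinite X"
    using not_has_heyting_negation_U_pred[OF that]
      has_heyting_negation_if_implication[OF _ botP_in_U_pred] by blast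
  then show ?thesis
    unfolding CMT_pred_disc
    using disc_unit_terminal
    by (intro conjI ballI allI impI)
      (simp_all add: bij_betw_def cMet1_obj_disc uniformly_continuous_map_disc disc_Times
        eq_CMT_disc meetP_in_U_pred joinP_in_U_pred topP_in_U_pred botP_in_U_pred
        exP_in_U_pred allP_in_U_pred not_has_heyting_negation_U_pred)
qed

end
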